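(* With the setup in the context, fix $X\subseteq E\setminus B$ and $Y\subseteq E$. Suppose the message $\mathbf{m}\in A^{E\setminus B}$ is chosen uniformly at random, and the transmitted word $\mathbf{w}\in C_{\mathbf{m}}$ is then chosen uniformly at random; let $\mathbf{M}=\mathbf{m}_X$ and $\mathbf{t}=\mathbf{w}_Y$. Then the conditional entropy (with logarithms to base $|A|$) $H(\mathbf{m}\mid\mathbf{t},\mathbf{M})=\sum_{\mathbf{M}\in A^X,\mathbf{t}\in A^Y}p(\mathbf{M},\mathbf{t})\sum_{\mathbf{m}\in A^{E\setminus B}}p(\mathbf{m}\mid\mathbf{t},\mathbf{M})\log_{|A|}\frac{1}{p(\mathbf{m}\mid\mathbf{t},\mathbf{M})}$ (with $0\log\frac10=0$) equals $n-k-|X|-\rho_X(Y)$.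
   Context: An almost affine code over a finite alphabet $A$ of length $n$ and dimension $k$ is a subset $C\subseteq A^n$ with $|C|=|A|^k$ such that for every $X\subseteq E=\{1,\dots,n\}$, $\log_{|A|}|C_X|$ is a nonnegative integer ($C_X$ = projection onto coordinates $X$); its associated matroid $M_C$ has rank function $r(X)=\log_{|A|}|C_X|$. Setup: $C$ is an almost affine code of length $n$ and dimension $k$ over $A$ with matroid rank function $r$; $B\subseteq E$ is a basis of $M_C$; $\varphi:A\times A\to A$ is such that for every $y\in A$ both $\varphi(y,\cdot)$ and $\varphi(\cdot,y)$ are bijections. For $\mathbf{m}\in A^{E\setminus B}$, $\Phi_{\mathbf{m}}(\mathbf{w})_i=\mathbf{w}_i$ for $i\in B$ and $=\varphi(\mathbf{w}_i,\mathbf{m}_i)$ for $i\in E\setminus B$, and $C_{\mathbf{m}}=\Phi_{\mathbf{m}}(C)$. For $X\subseteq E\setminus B$ and $\mathbf{M}\in A^X$, $D_{X,\mathbf{M}}=\bigcup_{\mathbf{m}_X=\mathbf{M}}C_{\mathbf{m}}$, an almost affine code with rank function $r_D(Y)=|Y\setminus(B\cup X)|+r(Y\cap(B\cup X))$ (independent of $\mathbf{M}$), and $\rho_X(Y)=r_D(Y)-r(Y)$. *)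

theory Defs
  imports "HOL-Probability.Probability"
begin

text \<open>Words of length n over the alphabet A are elements of PiE {1..n} (\<lambda>_. A).\<close>

definition proj :: "(nat \<Rightarrow> 'a) set \<Rightarrow> nat set \<Rightarrow> (nat \<Rightarrow> 'a) set" where
  "proj C X = (\<lambda>w. restrict w X) ` C"

definition almost_affine :: "'a set \<Rightarrow> nat \<Rightarrow> nat \<Rightarrow> (nat \<Rightarrow> 'a) set \<Rightarrow> bool" where
  "almost_affine A n k C \<longleftrightarrow>
     C \<subseteq> PiE {1..n} (\<lambda>_. A) \<and> card C = card A ^ k \<and>
     (\<forall>X \<subseteq> {1..n}. log (card A) (card (proj C X)) \<in> \<nat>)"

definition code_rank :: "'a set \<Rightarrow> (nat \<Rightarrow> 'a) set \<Rightarrow> nat set \<Rightarrow> real" where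
  "code_rank A C X = log (card A) (card (proj C X))"

definition is_basis :: "'a set \<Rightarrow> nat \<Rightarrow> (nat \<Rightarrow> 'a) set \<Rightarrow> nat set \<Rightarrow> bool" where
  "is_basis A n C B \<longleftrightarrow> B \<subseteq> {1..n} \<and> code_rank A C B = real (card B) \<and>
     (\<forall>B'. B \<subseteq> B' \<and> B' \<subseteq> {1..n} \<and> code_rank A C B' = real (card B') \<longrightarrow> B' = B)"

definition Phi :: "nat \<Rightarrow> nat set \<Rightarrow> ('a \<Rightarrow> 'a \<Rightarrow> 'a) \<Rightarrow> (nat \<Rightarrow> 'a) \<Rightarrow> (nat \<Rightarrow> 'a) \<Rightarrow> (nat \<Rightarrow> 'a)" where
  "Phi n B \<phi> m w = (\<lambda>i. if i \<in> B then w i else if i \<in> {1..n} then \<phi> (w i) (m i) else undefined)"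

definition Cm :: "nat \<Rightarrow> nat set \<Rightarrow> ('a \<Rightarrow> 'a \<Rightarrow> 'a) \<Rightarrow> (nat \<Rightarrow> 'a) set \<Rightarrow> (nat \<Rightarrow> 'a) \<Rightarrow> (nat \<Rightarrow> 'a) set" where
  "Cm n B \<phi> C m = Phi n B \<phi> m ` C"

definition rank_D :: "'a set \<Rightarrow> (nat \<Rightarrow> 'a) set \<Rightarrow> nat set \<Rightarrow> nat set \<Rightarrow> nat set \<Rightarrow> real" where
  "rank_D A C B X Y = real (card (Y - (B \<union> X))) + code_rank A C (Y \<inter> (B \<union> X))"

definition rho :: "'a set \<Rightarrow> (nat \<Rightarrow> 'a) set \<Rightarrow> nat set \<Rightarrow> nat set \<Rightarrow> nat set \<Rightarrow> real" where
  "rho A C B X Y = rank_D A C B X Y - code_rank A C Y"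

definition msg_word_pmf :: "'a set \<Rightarrow> nat \<Rightarrow> nat set \<Rightarrow> ('a \<Rightarrow> 'a \<Rightarrow> 'a) \<Rightarrow> (nat \<Rightarrow> 'a) set
    \<Rightarrow> ((nat \<Rightarrow> 'a) \<times> (nat \<Rightarrow> 'a)) pmf" where
  "msg_word_pmf A n B \<phi> C =
     do { m \<leftarrow> pmf_of_set (PiE ({1..n} - B) (\<lambda>_. A));
          w \<leftarrow> pmf_of_set (Cm n B \<phi> C m);
          return_pmf (m, w) }"

definition cond_entropy :: "'a set \<Rightarrow> nat \<Rightarrow> nat set \<Rightarrow> ('a \<Rightarrow> 'a \<Rightarrow> 'a) \<Rightarrow> (nat \<Rightarrow> 'a) set
    \<Rightarrow> nat set \<Rightarrow> nat set \<Rightarrow> real" where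
  "cond_entropy A n B \<phi> C X Y =
     (let P = msg_word_pmf A n B \<phi> C;
          pMt = (\<lambda>M t. measure_pmf.prob P {(m, w). restrict m X = M \<and> restrict w Y = t});
          pcond = (\<lambda>m M t. measure_pmf.prob P {(m', w). m' = m \<and> restrict m' X = M \<and> restrict w Y = t}
                             / pMt M t)
      in (\<Sum>M \<in> PiE X (\<lambda>_. A). \<Sum>t \<in> PiE Y (\<lambda>_. A).
            pMt M t * (\<Sum>m \<in> PiE ({1..n} - B) (\<lambda>_. A).
               (if pcond m M t = 0 then 0 else pcond m M t * log (card A) (1 / pcond m M t)))))"

end

theory Submission
  imports Defs
begin

text \<open>
  The pair (m, w) is uniform on the transmissions (m, Phi_m c), which correspond bijectively
  to C \<times> A^(E - B). If every fibre of (m, m_X, w_Y) has c1 elements and every fibre of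
  (m_X, w_Y) has c2 elements, then H(m | t, M) = log (c2 / c1). In an almost affine code every
  codeword agrees on Y with exactly |C| / |C_Y| codewords, because adding one coordinate to Y
  either leaves |C_Y| unchanged or multiplies it by |A|; so c1 = |C| / |C_Y|. For c2 the
  codeword must agree on Y \<inter> (B \<union> X), every other coordinate of Y is solved uniquely for the
  message because \<phi> is a Latin square, and the remaining message coordinates are free:
  c2 = |C| / |C_(Y \<inter> (B \<union> X))| * |A|^|E - (B \<union> X \<union> Y)|.
\<close>

lemma bind_pmf_of_set_Sigma:
  assumes A: "finite A" "A \<noteq> {}"
    and B: "\<And>a. a \<in> A \<Longrightarrow> finite (B a)" "\<And>a. a \<in> A \<Longrightarrow> B a \<noteq> {}"
    and card_B: "\<And>a. a \<in> A \<Longrightarrow> card (B a) = c"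
  shows "do { a \<leftarrow> pmf_of_set A; b \<leftarrow> pmf_of_set (B a); return_pmf (a, b) } = pmf_of_set (Sigma A B)"
proof (rule pmf_eqI)
  fix x :: "'a \<times> 'b"
  have slice: "pmf (do { b \<leftarrow> pmf_of_set (B a); return_pmf (a, b) }) x
      = (if fst x = a then indicator (B a) (snd x) / real c else 0)" if a: "a \<in> A" for a
  proof -
    have "do { b \<leftarrow> pmf_of_set (B a); return_pmf (a, b) } = pmf_of_set (Pair a ` B a)"
      using B[OF a] by (simp flip: map_pmf_def add: map_pmf_of_set_inj inj_on_def)
    moreover have "card (Pair a ` B a) = c"
      using card_B[OF a] by (simp add: card_image inj_on_def)
    ultimately show ?thesis
      using B[OF a] by (cases x) (auto simp: indicator_def)
  qed
  have "pmf (do { a \<leftarrow> pmf_of_set A; b \<leftarrow> pmf_of_set (B a); return_pmf (a, b) }) x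
      = (\<Sum>a\<in>A. (if fst x = a then indicator (B a) (snd x) / real c else 0)) / real (card A)"
    using A by (simp add: pmf_bind_pmf_of_set slice cong: sum.cong)
  also have "\<dots> = indicator (Sigma A B) x / real (card (Sigma A B))"
    using A B card_B by (cases x) (simp add: indicator_def)
  also have "\<dots> = pmf (pmf_of_set (Sigma A B)) x"
    using A B by (subst pmf_of_set) auto
  finally show "pmf (do { a \<leftarrow> pmf_of_set A; b \<leftarrow> pmf_of_set (B a); return_pmf (a, b) }) x
      = pmf (pmf_of_set (Sigma A B)) x" .
qed

lemma card_eq_sum_card_fibers:
  assumes "finite S" "finite T" "f ` S \<subseteq> T"
  shows "card S = (\<Sum>t\<in>T. card {x\<in>S. f x = t})"
  using sum.group[OF assms, of "\<lambda>_. 1 :: nat"] by simp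

lemma real_card_Diff_subset: "finite A \<Longrightarrow> B \<subseteq> A \<Longrightarrow> real (card (A - B)) = real (card A) - real (card B)"
  by (simp add: card_Diff_subset card_mono finite_subset)

lemma entropy_sum_of_uniform_weights:
  fixes f :: "'i \<Rightarrow> nat"
  assumes "finite I" and two_valued: "\<And>i. i \<in> I \<Longrightarrow> f i = 0 \<or> f i = c" and "c > 0"
    and total: "(\<Sum>i\<in>I. f i) = N" and "N > 0"
  shows "(\<Sum>i\<in>I. if real (f i) / real N = 0 then 0
                   else real (f i) / real N * log b (1 / (real (f i) / real N)))
         = log b (real N / real c)"
proof -
  define K where "K = {i\<in>I. f i = c}"
  have "N = (\<Sum>i\<in>K. f i)"
    unfolding total[symmetric] K_def using assms(1)
    by (intro sum.mono_neutral_right) (auto dest: two_valued)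
  then have N: "N = card K * c"
    by (simp add: K_def)
  have "(\<Sum>i\<in>I. if real (f i) / real N = 0 then 0
                   else real (f i) / real N * log b (1 / (real (f i) / real N)))
        = (\<Sum>i\<in>K. real c / real N * log b (real N / real c))"
    using assms(1,3) \<open>N > 0\<close> unfolding K_def
    by (intro sum.mono_neutral_cong_right) (auto dest: two_valued)
  also have "\<dots> = log b (real N / real c)"
    using N \<open>N > 0\<close> by (simp add: field_simps)
  finally show ?thesis .
qed

lemma cond_entropy_pmf_of_set:
  fixes S :: "('m \<times> 'w) set" and g :: "'m \<Rightarrow> 'x" and h :: "'w \<Rightarrow> 'y"
  assumes S: "finite S" "S \<noteq> {}" and "finite U" "finite V" "finite W"
    and range: "\<And>m w. (m, w) \<in> S \<Longrightarrow> m \<in> U \<and> g m \<in> V \<and> h w \<in> W"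
    and fine: "\<And>m w. (m, w) \<in> S \<Longrightarrow> card {(m', w') \<in> S. m' = m \<and> g m' = g m \<and> h w' = h w} = c1"
    and coarse: "\<And>m w. (m, w) \<in> S \<Longrightarrow> card {(m', w') \<in> S. g m' = g m \<and> h w' = h w} = c2"
  defines "pMt \<equiv> \<lambda>M t. measure_pmf.prob (pmf_of_set S) {(m, w). g m = M \<and> h w = t}"
  defines "pcond \<equiv> \<lambda>m M t. measure_pmf.prob (pmf_of_set S) {(m', w). m' = m \<and> g m' = M \<and> h w = t}
                           / pMt M t"
  shows "(\<Sum>M\<in>V. \<Sum>t\<in>W. pMt M t * (\<Sum>m\<in>U.
            if pcond m M t = 0 then 0 else pcond m M t * log b (1 / pcond m M t)))
         = log b (real c2 / real c1)"
proof -
  define N where "N M t = card {(m, w) \<in> S. g m = M \<and> h w = t}" for M t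
  define N1 where "N1 m M t = card {(m', w) \<in> S. m' = m \<and> g m' = M \<and> h w = t}" for m M t
  have prob: "measure_pmf.prob (pmf_of_set S) {(m, w). P m w} = card {(m, w) \<in> S. P m w} / card S"
    for P :: "'m \<Rightarrow> 'w \<Rightarrow> bool"
    using S by (simp add: measure_pmf_of_set Int_def split_def)
  have pMt_eq: "pMt M t = N M t / card S" for M t
    unfolding pMt_def N_def by (rule prob)
  have pcond_eq: "pcond m M t = N1 m M t / N M t" for m M t
    using S unfolding pcond_def pMt_eq N1_def prob[of "\<lambda>m' w. m' = m \<and> g m' = M \<and> h w = t"] by simp
  have inner: "(\<Sum>m\<in>U. if pcond m M t = 0 then 0 else pcond m M t * log b (1 / pcond m M t))
      = log b (real c2 / real c1)" if "N M t \<noteq> 0" for M t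
  proof -
    have "{(m, w) \<in> S. g m = M \<and> h w = t} \<noteq> {}"
      using that unfolding N_def by (metis card.empty)
    then obtain m0 w0 where s0: "(m0, w0) \<in> S" "g m0 = M" "h w0 = t"
      by blast
    have "N M t = c2"
      using coarse[OF s0(1)] s0 by (simp add: N_def)
    have "(m0, w0) \<in> {(m', w') \<in> S. m' = m0 \<and> g m' = g m0 \<and> h w' = h w0}"
      using s0(1) by simp
    then have "c1 > 0"
      unfolding fine[OF s0(1), symmetric] using S(1) by (auto simp: card_gt_0_iff intro: finite_subset)
    have N1_values: "N1 m M t = 0 \<or> N1 m M t = c1" for m
    proof (cases "N1 m M t = 0")
      case False
      then have "{(m', w) \<in> S. m' = m \<and> g m' = M \<and> h w = t} \<noteq> {}"
        unfolding N1_def by (metis card.empty)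
      then obtain w1 where w1: "(m, w1) \<in> S" "g m = M" "h w1 = t"
        by blast
      show ?thesis
        using fine[OF w1(1)] w1(2,3) by (simp add: N1_def)
    qed simp
    have "finite {(m, w) \<in> S. g m = M \<and> h w = t}"
      using S(1) by (rule rev_finite_subset) auto
    then have "N M t = (\<Sum>m\<in>U. card {x \<in> {(m, w) \<in> S. g m = M \<and> h w = t}. fst x = m})"
      unfolding N_def using range \<open>finite U\<close> by (intro card_eq_sum_card_fibers) auto
    then have "(\<Sum>m\<in>U. N1 m M t) = N M t"
      unfolding N1_def by (auto intro!: sum.cong arg_cong[where f = card])
    with N1_values show ?thesis
      unfolding pcond_eq \<open>N M t = c2\<close>[symmetric] using \<open>c1 > 0\<close> \<open>finite U\<close> that
      by (intro entropy_sum_of_uniform_weights) auto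
  qed
  have "card S = (\<Sum>p\<in>V \<times> W. card {x \<in> S. (g (fst x), h (snd x)) = p})"
    using S(1) range \<open>finite V\<close> \<open>finite W\<close> by (intro card_eq_sum_card_fibers) auto
  also have "\<dots> = (\<Sum>M\<in>V. \<Sum>t\<in>W. N M t)"
    unfolding N_def sum.cartesian_product by (auto intro!: sum.cong arg_cong[where f = card])
  finally have total: "(\<Sum>M\<in>V. \<Sum>t\<in>W. real (N M t)) = real (card S)"
    by simp
  have summand: "pMt M t * (\<Sum>m\<in>U. if pcond m M t = 0 then 0 else pcond m M t * log b (1 / pcond m M t))
      = real (N M t) * (log b (real c2 / real c1) / real (card S))" for M t
    by (cases "N M t = 0") (simp_all add: pMt_eq inner)
  show ?thesis
    unfolding summand sum_distrib_right[symmetric] total using S by simp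
qed

lemma restrict_eq_restrict_iff: "restrict f Y = restrict g Y \<longleftrightarrow> (\<forall>i\<in>Y. f i = g i)"
  by (auto simp: restrict_def fun_eq_iff)

lemma proj_eq_image_restrict: "Y \<subseteq> Z \<Longrightarrow> proj C Y = (\<lambda>w. restrict w Y) ` proj C Z"
  unfolding proj_def image_image restrict_restrict by (simp add: inf.absorb2)

lemma inj_on_restrict_coordinate: "inj_on (\<lambda>w. (restrict w Y, w j)) (proj C (insert j Y))"
proof (rule inj_onI)
  fix w w'
  assume "w \<in> proj C (insert j Y)" "w' \<in> proj C (insert j Y)"
    and "(restrict w Y, w j) = (restrict w' Y, w' j)"
  then show "w = w'"
    unfolding proj_def by (auto simp: fun_eq_iff restrict_def split: if_splits)
qed

lemma restrict_coordinate_in_proj_times: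
  assumes "\<And>c. c \<in> C \<Longrightarrow> c j \<in> A"
  shows "(\<lambda>w. (restrict w Y, w j)) ` proj C (insert j Y) \<subseteq> proj C Y \<times> A"
  using assms by (auto simp: proj_def inf.absorb2[OF subset_insertI])

lemma card_proj_insert_le:
  assumes "finite C" "finite A" "\<And>c. c \<in> C \<Longrightarrow> c j \<in> A"
  shows "card (proj C (insert j Y)) \<le> card A * card (proj C Y)"
proof -
  have "finite (proj C Y \<times> A)"
    using assms(1,2) by (simp add: proj_def)
  from card_inj_on_le[OF inj_on_restrict_coordinate restrict_coordinate_in_proj_times[OF assms(3)] this]
  show ?thesis
    by (simp add: card_cartesian_product mult.commute)
qed

lemma coordinate_determined_if_card_proj_insert_eq:
  assumes "finite C" and card_eq: "card (proj C (insert j Y)) = card (proj C Y)"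
    and c: "c \<in> C" "c' \<in> C" and agree: "\<forall>i\<in>Y. c' i = c i"
  shows "c' j = c j"
proof -
  have "(\<lambda>w. restrict w Y) ` proj C (insert j Y) = proj C Y"
    by (rule proj_eq_image_restrict[symmetric]) auto
  then have "inj_on (\<lambda>w. restrict w Y) (proj C (insert j Y))"
    using assms(1) card_eq by (intro eq_card_imp_inj_on) (auto simp: proj_def)
  moreover have "restrict (restrict c' (insert j Y)) Y = restrict (restrict c (insert j Y)) Y"
    using agree by (auto simp: fun_eq_iff restrict_def)
  moreover have "restrict c' (insert j Y) \<in> proj C (insert j Y)" "restrict c (insert j Y) \<in> proj C (insert j Y)"
    using c by (auto simp: proj_def)
  ultimately have "restrict c' (insert j Y) = restrict c (insert j Y)"
    by (rule inj_onD)
  then show ?thesis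
    by (metis insertI1 restrict_apply')
qed

lemma coordinate_free_if_card_proj_insert_eq_mult:
  assumes "finite C" "finite A" "\<And>c. c \<in> C \<Longrightarrow> c j \<in> A"
    and card_eq: "card (proj C (insert j Y)) = card A * card (proj C Y)"
    and "c \<in> C" "v \<in> A"
  obtains c' where "c' \<in> C" "\<forall>i\<in>Y. c' i = c i" "c' j = v"
proof -
  let ?f = "\<lambda>w. (restrict w Y, w j)"
  have "finite (proj C Y \<times> A)"
    using assms(1,2) by (simp add: proj_def)
  moreover have "card (?f ` proj C (insert j Y)) = card (proj C Y \<times> A)"
    using card_eq by (simp add: card_image[OF inj_on_restrict_coordinate] card_cartesian_product)
  ultimately have onto: "?f ` proj C (insert j Y) = proj C Y \<times> A"
    using restrict_coordinate_in_proj_times[OF assms(3)] by (intro card_subset_eq)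
  have "(restrict c Y, v) \<in> ?f ` proj C (insert j Y)"
    unfolding onto using assms(5,6) by (simp add: proj_def)
  then obtain c' where "c' \<in> C" "restrict (restrict c' (insert j Y)) Y = restrict c Y" "c' j = v"
    unfolding proj_def by auto
  then show thesis
    using that[of c'] by (simp add: inf.absorb2[OF subset_insertI] restrict_eq_restrict_iff)
qed

locale almost_affine_code =
  fixes A :: "'a set" and n k :: nat and C :: "(nat \<Rightarrow> 'a) set"
  assumes finite_alphabet: "finite A" and card_alphabet: "2 \<le> card A"
    and almost_affine: "almost_affine A n k C"
begin

lemma code_subset: "C \<subseteq> PiE {1..n} (\<lambda>_. A)"
  using almost_affine by (simp add: almost_affine_def)

lemma code_finite: "finite C"
  by (rule finite_subset[OF code_subset]) (simp add: finite_PiE finite_alphabet)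

lemma card_code: "card C = card A ^ k"
  using almost_affine by (simp add: almost_affine_def)

lemma code_nonempty: "C \<noteq> {}"
  using card_code card_alphabet by auto

lemma code_letter: "c \<in> C \<Longrightarrow> i \<in> {1..n} \<Longrightarrow> c i \<in> A"
  using code_subset by (auto simp: PiE_iff)

lemma code_eqI:
  assumes "c \<in> C" "c' \<in> C" "\<And>i. i \<in> {1..n} \<Longrightarrow> c i = c' i"
  shows "c = c'"
proof -
  have "c \<in> PiE {1..n} (\<lambda>_. A)" "c' \<in> PiE {1..n} (\<lambda>_. A)"
    using assms(1,2) code_subset by auto
  then show ?thesis
    using assms(3) by (rule PiE_ext)
qed

lemma proj_all_coordinates: "proj C {1..n} = C"
proof -
  have "(\<lambda>w. restrict w {1..n}) ` C = (\<lambda>w. w) ` C"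
    using code_subset by (intro image_cong) auto
  then show ?thesis
    by (simp add: proj_def)
qed

lemma card_proj_pos: "card (proj C Y) > 0"
  using code_finite code_nonempty by (simp add: proj_def card_gt_0_iff)

lemma card_proj_eq_power_if_code_rank:
  assumes "code_rank A C Y = real r"
  shows "card (proj C Y) = card A ^ r"
proof -
  have "real (card (proj C Y)) = real (card A) powr code_rank A C Y"
    using card_proj_pos card_alphabet by (simp add: code_rank_def)
  also have "\<dots> = real (card A ^ r)"
    using assms card_alphabet by (simp add: powr_realpow)
  finally show ?thesis
    by (simp only: of_nat_eq_iff)
qed

lemma card_proj_power:
  assumes "Y \<subseteq> {1..n}"
  obtains r where "card (proj C Y) = card A ^ r"
proof -
  have "code_rank A C Y \<in> \<nat>"
    using almost_affine assms by (simp add: almost_affine_def code_rank_def)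
  then show thesis
    by (metis Nats_cases card_proj_eq_power_if_code_rank that)
qed

lemma card_proj_insert_cases:
  assumes "Y \<subseteq> {1..n}" "j \<in> {1..n}"
  shows "card (proj C (insert j Y)) = card (proj C Y)
       \<or> card (proj C (insert j Y)) = card A * card (proj C Y)"
proof -
  obtain r r' where r: "card (proj C Y) = card A ^ r" and r': "card (proj C (insert j Y)) = card A ^ r'"
    using card_proj_power assms by (metis insert_subset)
  have "proj C Y = (\<lambda>w. restrict w Y) ` proj C (insert j Y)"
    by (rule proj_eq_image_restrict) auto
  then have "card (proj C Y) \<le> card (proj C (insert j Y))"
    using code_finite by (metis card_image_le finite_imageI proj_def)
  then have "r \<le> r'"
    using r r' card_alphabet by (simp add: power_le_imp_le_exp)
  moreover have "card (proj C (insert j Y)) \<le> card A * card (proj C Y)"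
    using code_finite finite_alphabet code_letter assms(2) by (intro card_proj_insert_le)
  then have "r' \<le> Suc r"
    using r r' card_alphabet by (simp add: power_le_imp_le_exp flip: power_Suc)
  ultimately have "r' = r \<or> r' = Suc r"
    by linarith
  then show ?thesis
    using r r' by auto
qed

definition code_fiber :: "nat set \<Rightarrow> (nat \<Rightarrow> 'a) \<Rightarrow> (nat \<Rightarrow> 'a) set" where
  "code_fiber Y c = {c' \<in> C. \<forall>i\<in>Y. c' i = c i}"

lemma finite_code_fiber: "finite (code_fiber Y c)"
  using code_finite by (simp add: code_fiber_def)

lemma code_fiber_all_coordinates: "c \<in> C \<Longrightarrow> code_fiber {1..n} c = {c}"
  using code_eqI by (auto simp: code_fiber_def)

text \<open>Downward induction on |E - Y|: adding a coordinate either leaves every fibre unchanged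
  or splits it into |A| fibres of the larger index set.\<close>

lemma card_code_fiber_mult_card_proj:
  assumes "Y \<subseteq> {1..n}" "c \<in> C"
  shows "card (code_fiber Y c) * card (proj C Y) = card C"
  using assms
proof (induction "card ({1..n} - Y)" arbitrary: Y c)
  case 0
  then have "Y = {1..n}"
    by auto
  then show ?case
    using code_fiber_all_coordinates[OF 0(3)] proj_all_coordinates by simp
next
  case (Suc d)
  then obtain j where j: "j \<in> {1..n}" "j \<notin> Y"
    by (metis Diff_eq_empty_iff card.empty nat.distinct(1) subsetI)
  have "card ({1..n} - insert j Y) = d"
    using Suc.hyps(2) j by (metis Diff_insert card_Diff_singleton DiffI diff_Suc_1)
  then have IH: "card (code_fiber (insert j Y) c') * card (proj C (insert j Y)) = card C"
    if "c' \<in> C" for c'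
    using Suc.hyps(1) Suc.prems(1) j(1) that by blast
  from card_proj_insert_cases[OF Suc.prems(1) j(1)] show ?case
  proof
    assume eq: "card (proj C (insert j Y)) = card (proj C Y)"
    have "code_fiber Y c = code_fiber (insert j Y) c"
      using coordinate_determined_if_card_proj_insert_eq[OF code_finite eq _ Suc.prems(2)]
      by (auto simp: code_fiber_def)
    then show ?case
      using IH[OF Suc.prems(2)] eq by simp
  next
    assume mult: "card (proj C (insert j Y)) = card A * card (proj C Y)"
    have "\<exists>c'. c' \<in> code_fiber Y c \<and> c' j = v" if "v \<in> A" for v
      using coordinate_free_if_card_proj_insert_eq_mult[OF code_finite finite_alphabet _ mult Suc.prems(2) that]
        code_letter j(1) by (auto simp: code_fiber_def)
    then obtain ext where ext: "\<And>v. v \<in> A \<Longrightarrow> ext v \<in> code_fiber Y c \<and> ext v j = v"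
      by metis
    have "code_fiber Y c = (\<Union>v\<in>A. code_fiber (insert j Y) (ext v))"
      using ext code_letter[OF _ j(1)] by (auto simp: code_fiber_def)
    moreover have "code_fiber (insert j Y) (ext v) \<inter> code_fiber (insert j Y) (ext v') = {}"
      if "v \<in> A" "v' \<in> A" "v \<noteq> v'" for v v'
      using ext that by (auto simp: code_fiber_def)
    ultimately have "card (code_fiber Y c) = (\<Sum>v\<in>A. card (code_fiber (insert j Y) (ext v)))"
      using finite_alphabet by (simp add: card_UN_disjoint finite_code_fiber)
    then have "card A * (card (code_fiber Y c) * card (proj C Y))
        = (\<Sum>v\<in>A. card (code_fiber (insert j Y) (ext v))) * card (proj C (insert j Y))"
      by (simp add: mult)
    also have "\<dots> = (\<Sum>v\<in>A. card (code_fiber (insert j Y) (ext v)) * card (proj C (insert j Y)))"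
      by (rule sum_distrib_right)
    also have "\<dots> = (\<Sum>v\<in>A. card C)"
      using ext by (intro sum.cong refl IH) (simp add: code_fiber_def)
    also have "\<dots> = card A * card C"
      by simp
    finally show ?case
      using card_alphabet by simp
  qed
qed

lemma card_code_fiber_eq:
  assumes "Y \<subseteq> {1..n}" "c \<in> C" "c' \<in> C"
  shows "card (code_fiber Y c) = card (code_fiber Y c')"
  using card_code_fiber_mult_card_proj[OF assms(1,2)] card_code_fiber_mult_card_proj[OF assms(1,3)]
    card_proj_pos by (metis mult_right_cancel not_less0)

lemma card_basis:
  assumes "is_basis A n C B"
  shows "card B = k"
proof -
  have B: "B \<subseteq> {1..n}" and rank_B: "code_rank A C B = card B"
    and maximal: "\<And>B'. B \<subseteq> B' \<Longrightarrow> B' \<subseteq> {1..n} \<Longrightarrow> code_rank A C B' = card B' \<Longrightarrow> B' = B"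
    using assms by (auto simp: is_basis_def)
  have proj_B: "card (proj C B) = card A ^ card B"
    using rank_B by (rule card_proj_eq_power_if_code_rank)
  have determined: "c' j = c j" if "j \<in> {1..n}" "j \<notin> B" "c \<in> C" "c' \<in> C" "\<forall>i\<in>B. c' i = c i" for j c c'
  proof -
    have "card (proj C (insert j B)) \<noteq> card A * card (proj C B)"
    proof
      assume "card (proj C (insert j B)) = card A * card (proj C B)"
      then have "card (proj C (insert j B)) = card A ^ card (insert j B)"
        using proj_B that(2) finite_subset[OF B] by simp
      then have "code_rank A C (insert j B) = card (insert j B)"
        using card_alphabet by (simp add: code_rank_def log_nat_power)
      then have "insert j B = B"
        using maximal B that(1) by blast
      with that(2) show False
        by blast
    qed
    then have "card (proj C (insert j B)) = card (proj C B)"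
      using card_proj_insert_cases[OF B that(1)] by blast
    then show ?thesis
      using coordinate_determined_if_card_proj_insert_eq[OF code_finite _ that(3-5)] by blast
  qed
  obtain c where c: "c \<in> C"
    using code_nonempty by blast
  have "c' = c" if "c' \<in> code_fiber B c" for c'
  proof (rule code_eqI)
    show "c' \<in> C"
      using that by (simp add: code_fiber_def)
    fix i
    assume i: "i \<in> {1..n}"
    show "c' i = c i"
      using that c determined[OF i] by (cases "i \<in> B") (auto simp: code_fiber_def)
  qed (rule c)
  then have "code_fiber B c = {c}"
    using c by (auto simp: code_fiber_def)
  then have "card (proj C B) = card C"
    using card_code_fiber_mult_card_proj[OF B c] by simp
  then have "card A ^ card B = card A ^ k"
    by (simp add: proj_B card_code)
  then show ?thesis
    using card_alphabet by simp
qed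

end

locale masked_almost_affine_code = almost_affine_code A n k C
  for A :: "'a set" and n k :: nat and C :: "(nat \<Rightarrow> 'a) set" +
  fixes B :: "nat set" and \<phi> :: "'a \<Rightarrow> 'a \<Rightarrow> 'a"
  assumes basis: "is_basis A n C B"
    and latin_square: "\<forall>y \<in> A. bij_betw (\<lambda>x. \<phi> y x) A A \<and> bij_betw (\<lambda>x. \<phi> x y) A A"
begin

definition messages :: "(nat \<Rightarrow> 'a) set" where
  "messages = PiE ({1..n} - B) (\<lambda>_. A)"

definition transmissions :: "((nat \<Rightarrow> 'a) \<times> (nat \<Rightarrow> 'a)) set" where
  "transmissions = (\<lambda>(c, m). (m, Phi n B \<phi> m c)) ` (C \<times> messages)"

lemma basis_subset: "B \<subseteq> {1..n}"
  using basis by (simp add: is_basis_def)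

lemma finite_messages: "finite messages"
  using finite_alphabet by (simp add: messages_def finite_PiE)

lemma messages_nonempty: "messages \<noteq> {}"
  using card_alphabet by (auto simp: messages_def PiE_eq_empty_iff)

lemma message_letter: "m \<in> messages \<Longrightarrow> i \<in> {1..n} - B \<Longrightarrow> m i \<in> A"
  by (auto simp: messages_def PiE_iff)

lemma phi_closed: "x \<in> A \<Longrightarrow> y \<in> A \<Longrightarrow> \<phi> x y \<in> A"
  using latin_square by (meson bij_betw_apply)

lemma phi_cancel_right: "y \<in> A \<Longrightarrow> x \<in> A \<Longrightarrow> x' \<in> A \<Longrightarrow> \<phi> x y = \<phi> x' y \<Longrightarrow> x = x'"
  using latin_square by (meson bij_betw_def inj_onD)

lemma card_phi_solutions:
  assumes "x \<in> A" "z \<in> A"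
  shows "card {v \<in> A. \<phi> x v = z} = 1"
proof -
  have bij: "bij_betw (\<phi> x) A A"
    using latin_square assms(1) by blast
  then obtain v where "v \<in> A" "\<phi> x v = z"
    using assms(2) by (metis bij_betw_iff_bijections)
  with bij have "{v \<in> A. \<phi> x v = z} = {v}"
    by (auto simp: bij_betw_def dest: inj_onD)
  then show ?thesis
    by simp
qed

lemma Phi_coordinate:
  "i \<in> {1..n} \<Longrightarrow> Phi n B \<phi> m c i = (if i \<in> B then c i else \<phi> (c i) (m i))"
  by (simp add: Phi_def)

lemma Phi_letter: "m \<in> messages \<Longrightarrow> c \<in> C \<Longrightarrow> i \<in> {1..n} \<Longrightarrow> Phi n B \<phi> m c i \<in> A"
  using code_letter message_letter phi_closed by (simp add: Phi_coordinate)

lemma Phi_eq_iff: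
  assumes "m \<in> messages" "c \<in> C" "c' \<in> C" "i \<in> {1..n}"
  shows "Phi n B \<phi> m c' i = Phi n B \<phi> m c i \<longleftrightarrow> c' i = c i"
  using assms phi_cancel_right[of "m i" "c' i" "c i"] code_letter message_letter
  by (auto simp: Phi_coordinate)

lemma inj_on_Phi: "m \<in> messages \<Longrightarrow> inj_on (Phi n B \<phi> m) C"
  by (rule inj_onI, rule code_eqI) (auto dest: Phi_eq_iff simp: fun_eq_iff)

lemma inj_on_transmit: "inj_on (\<lambda>(c, m). (m, Phi n B \<phi> m c)) (C \<times> messages)"
  using inj_on_Phi by (auto simp: inj_on_def)

lemma msg_word_pmf_eq: "msg_word_pmf A n B \<phi> C = pmf_of_set transmissions"
proof -
  have Sigma: "transmissions = Sigma messages (Cm n B \<phi> C)"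
    by (auto simp: transmissions_def Cm_def)
  have "card (Cm n B \<phi> C m) = card C" if "m \<in> messages" for m
    using inj_on_Phi[OF that] by (simp add: Cm_def card_image)
  then show ?thesis
    unfolding msg_word_pmf_def messages_def[symmetric] Sigma
    using finite_messages messages_nonempty code_finite code_nonempty
    by (intro bind_pmf_of_set_Sigma) (auto simp: Cm_def)
qed

lemma card_transmissions_filter:
  "card {(m, w) \<in> transmissions. P m w} = card {(c, m) \<in> C \<times> messages. P m (Phi n B \<phi> m c)}"
proof -
  have "{(m, w) \<in> transmissions. P m w}
      = (\<lambda>(c, m). (m, Phi n B \<phi> m c)) ` {(c, m) \<in> C \<times> messages. P m (Phi n B \<phi> m c)}"
    by (auto simp: transmissions_def)
  moreover have "inj_on (\<lambda>(c, m). (m, Phi n B \<phi> m c)) {(c, m) \<in> C \<times> messages. P m (Phi n B \<phi> m c)}"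
    by (rule inj_on_subset[OF inj_on_transmit]) auto
  ultimately show ?thesis
    by (simp add: card_image)
qed

lemma Phi_restrict_eq_iff:
  assumes "X \<subseteq> {1..n} - B" "Y \<subseteq> {1..n}" "m \<in> messages" "c \<in> C" "c' \<in> C"
    and agree_X: "\<forall>i\<in>X. m' i = m i"
  shows "restrict (Phi n B \<phi> m' c') Y = restrict (Phi n B \<phi> m c) Y
     \<longleftrightarrow> (\<forall>i\<in>Y \<inter> (B \<union> X). c' i = c i) \<and> (\<forall>i\<in>Y - B - X. \<phi> (c' i) (m' i) = \<phi> (c i) (m i))"
proof -
  have "Phi n B \<phi> m' c' i = Phi n B \<phi> m c i
      \<longleftrightarrow> (i \<in> B \<union> X \<longrightarrow> c' i = c i) \<and> (i \<notin> B \<union> X \<longrightarrow> \<phi> (c' i) (m' i) = \<phi> (c i) (m i))"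
    if "i \<in> Y" for i
  proof -
    have i: "i \<in> {1..n}"
      using that assms(2) by blast
    show ?thesis
    proof (cases "i \<in> X")
      case True
      then have "m' i = m i" "m i \<in> A" "i \<notin> B"
        using agree_X assms(1,3) message_letter by auto
      then show ?thesis
        using True phi_cancel_right[of "m i" "c' i" "c i"] code_letter[OF _ i] assms(4,5)
        by (auto simp: Phi_coordinate[OF i])
    qed (simp add: Phi_coordinate[OF i])
  qed
  then show ?thesis
    by (auto simp: restrict_eq_restrict_iff)
qed

lemma card_matching_messages:
  assumes X: "X \<subseteq> {1..n} - B" and Y: "Y \<subseteq> {1..n}" and "m \<in> messages" "c \<in> C" "c' \<in> C"
  shows "card {m' \<in> messages. restrict m' X = restrict m X
                 \<and> restrict (Phi n B \<phi> m' c') Y = restrict (Phi n B \<phi> m c) Y}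
       = (if c' \<in> code_fiber (Y \<inter> (B \<union> X)) c then card A ^ card ({1..n} - B - X - Y) else 0)"
proof -
  define H where
    "H i = {v \<in> A. (i \<in> X \<longrightarrow> v = m i) \<and> (i \<in> Y - X \<longrightarrow> \<phi> (c' i) v = \<phi> (c i) (m i))}" for i
  have matching: "{m' \<in> messages. restrict m' X = restrict m X
           \<and> restrict (Phi n B \<phi> m' c') Y = restrict (Phi n B \<phi> m c) Y}
      = (if c' \<in> code_fiber (Y \<inter> (B \<union> X)) c then PiE ({1..n} - B) H else {})"
  proof (intro set_eqI)
    fix m'
    show "m' \<in> {m' \<in> messages. restrict m' X = restrict m X
                  \<and> restrict (Phi n B \<phi> m' c') Y = restrict (Phi n B \<phi> m c) Y}
        \<longleftrightarrow> m' \<in> (if c' \<in> code_fiber (Y \<inter> (B \<union> X)) c then PiE ({1..n} - B) H else {})"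
    proof (cases "m' \<in> messages")
      case True
      have "restrict m' X = restrict m X \<and> restrict (Phi n B \<phi> m' c') Y = restrict (Phi n B \<phi> m c) Y
          \<longleftrightarrow> (\<forall>i\<in>X. m' i = m i) \<and> c' \<in> code_fiber (Y \<inter> (B \<union> X)) c
              \<and> (\<forall>i\<in>Y - B - X. \<phi> (c' i) (m' i) = \<phi> (c i) (m i))"
        using Phi_restrict_eq_iff[OF X Y assms(3-5)] assms(5)
        by (auto simp: restrict_eq_restrict_iff code_fiber_def)
      then show ?thesis
        using True X Y by (auto simp: messages_def H_def PiE_iff)
    next
      case False
      then have "m' \<notin> PiE ({1..n} - B) H"
        by (auto simp: messages_def H_def PiE_iff)
      with False show ?thesis
        by auto
    qed
  qed
  have card_H: "card (H i) = (if i \<in> X \<union> Y then 1 else card A)" if i: "i \<in> {1..n} - B" for i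
  proof (cases "i \<in> X")
    case True
    then have "H i = {m i}"
      using message_letter[OF assms(3) i] by (auto simp: H_def)
    with True show ?thesis
      by simp
  next
    case False
    have "\<phi> (c i) (m i) \<in> A"
      using i phi_closed code_letter[OF assms(4)] message_letter[OF assms(3)] by blast
    then have "i \<in> Y \<Longrightarrow> card (H i) = 1"
      using False i code_letter[OF assms(5)] card_phi_solutions by (simp add: H_def)
    with False show ?thesis
      by (simp add: H_def)
  qed
  have "card (PiE ({1..n} - B) H) = (\<Prod>i\<in>{1..n} - B. card (H i))"
    by (rule card_PiE) simp
  also have "\<dots> = (\<Prod>i\<in>{1..n} - B. if i \<in> X \<union> Y then 1 else card A)"
    by (rule prod.cong[OF refl card_H])
  also have "\<dots> = (\<Prod>i\<in>{1..n} - B - X - Y. card A)"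
    by (rule prod.mono_neutral_cong_right) auto
  finally show ?thesis
    by (simp add: matching)
qed

lemma card_fine_fiber:
  assumes "Y \<subseteq> {1..n}" "m \<in> messages" "c \<in> C"
  shows "card {(m', w') \<in> transmissions. m' = m \<and> restrict m' X = restrict m X
                \<and> restrict w' Y = restrict (Phi n B \<phi> m c) Y}
       = card (code_fiber Y c)"
proof -
  have agree: "Phi n B \<phi> m c' i = Phi n B \<phi> m c i \<longleftrightarrow> c' i = c i"
    if "c' \<in> C" "i \<in> Y" for c' i
    using Phi_eq_iff[OF assms(2,3) that(1)] assms(1) that(2) by blast
  have "{(c', m') \<in> C \<times> messages. m' = m \<and> restrict m' X = restrict m X
          \<and> restrict (Phi n B \<phi> m' c') Y = restrict (Phi n B \<phi> m c) Y}
      = code_fiber Y c \<times> {m}"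
    using assms(2) by (auto simp: code_fiber_def restrict_eq_restrict_iff agree)
  then show ?thesis
    by (subst card_transmissions_filter) (simp add: card_cartesian_product)
qed

lemma card_coarse_fiber:
  assumes "X \<subseteq> {1..n} - B" "Y \<subseteq> {1..n}" "m \<in> messages" "c \<in> C"
  shows "card {(m', w') \<in> transmissions. restrict m' X = restrict m X
                \<and> restrict w' Y = restrict (Phi n B \<phi> m c) Y}
       = card (code_fiber (Y \<inter> (B \<union> X)) c) * card A ^ card ({1..n} - B - X - Y)"
proof -
  let ?matching = "\<lambda>c'. {m' \<in> messages. restrict m' X = restrict m X
                          \<and> restrict (Phi n B \<phi> m' c') Y = restrict (Phi n B \<phi> m c) Y}"
  have "card {(m', w') \<in> transmissions. restrict m' X = restrict m X
                \<and> restrict w' Y = restrict (Phi n B \<phi> m c) Y}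
      = card {(c', m') \<in> C \<times> messages. restrict m' X = restrict m X
                \<and> restrict (Phi n B \<phi> m' c') Y = restrict (Phi n B \<phi> m c) Y}"
    by (rule card_transmissions_filter)
  also have "\<dots> = card (Sigma C ?matching)"
    by (rule arg_cong[where f = card]) auto
  also have "\<dots> = (\<Sum>c'\<in>C. card (?matching c'))"
    using code_finite finite_messages by (intro card_SigmaI) auto
  also have "\<dots> = (\<Sum>c'\<in>C. if c' \<in> code_fiber (Y \<inter> (B \<union> X)) c
                             then card A ^ card ({1..n} - B - X - Y) else 0)"
    using assms by (intro sum.cong refl card_matching_messages)
  also have "\<dots> = card (code_fiber (Y \<inter> (B \<union> X)) c) * card A ^ card ({1..n} - B - X - Y)"
    using code_finite by (simp add: sum.If_cases code_fiber_def Int_def)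
  finally show ?thesis .
qed

lemma cond_entropy_eq:
  assumes X: "X \<subseteq> {1..n} - B" and Y: "Y \<subseteq> {1..n}"
  shows "cond_entropy A n B \<phi> C X Y
       = real (card ({1..n} - B - X - Y)) + code_rank A C Y - code_rank A C (Y \<inter> (B \<union> X))"
proof -
  let ?Y' = "Y \<inter> (B \<union> X)" and ?e = "card ({1..n} - B - X - Y)"
  obtain c0 where c0: "c0 \<in> C"
    using code_nonempty by blast
  have Y': "?Y' \<subseteq> {1..n}"
    using Y by blast
  have transmission: "\<exists>c\<in>C. m \<in> messages \<and> w = Phi n B \<phi> m c" if "(m, w) \<in> transmissions" for m w
    using that by (auto simp: transmissions_def)
  have "cond_entropy A n B \<phi> C X Y
      = log (card A) (real (card (code_fiber ?Y' c0) * card A ^ ?e) / real (card (code_fiber Y c0)))"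
    unfolding cond_entropy_def Let_def msg_word_pmf_eq messages_def[symmetric]
  proof (rule cond_entropy_pmf_of_set)
    show "finite transmissions" "transmissions \<noteq> {}"
      using code_finite finite_messages code_nonempty messages_nonempty by (auto simp: transmissions_def)
    show "finite messages" "finite (PiE X (\<lambda>_. A))" "finite (PiE Y (\<lambda>_. A))"
      using finite_messages finite_alphabet finite_subset[OF X] finite_subset[OF Y] by (auto intro: finite_PiE)
  next
    fix m w
    assume "(m, w) \<in> transmissions"
    then obtain c where "c \<in> C" "m \<in> messages" "w = Phi n B \<phi> m c"
      using transmission by blast
    show "m \<in> messages \<and> restrict m X \<in> PiE X (\<lambda>_. A) \<and> restrict w Y \<in> PiE Y (\<lambda>_. A)"
      using \<open>m \<in> messages\<close> \<open>c \<in> C\<close> \<open>w = _\<close> X Y message_letter Phi_letter by auto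
    show "card {(m', w') \<in> transmissions. m' = m \<and> restrict m' X = restrict m X \<and> restrict w' Y = restrict w Y}
        = card (code_fiber Y c0)"
      using card_fine_fiber[OF Y \<open>m \<in> messages\<close> \<open>c \<in> C\<close>] card_code_fiber_eq[OF Y \<open>c \<in> C\<close> c0]
        \<open>w = _\<close> by simp
    show "card {(m', w') \<in> transmissions. restrict m' X = restrict m X \<and> restrict w' Y = restrict w Y}
        = card (code_fiber ?Y' c0) * card A ^ ?e"
      using card_coarse_fiber[OF X Y \<open>m \<in> messages\<close> \<open>c \<in> C\<close>] card_code_fiber_eq[OF Y' \<open>c \<in> C\<close> c0]
        \<open>w = _\<close> by simp
  qed
  also have "\<dots> = log (card A) (card A ^ ?e * (card (proj C Y) / card (proj C ?Y')))"
  proof -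
    have "real (card (code_fiber Y c0)) = card C / card (proj C Y)"
      "real (card (code_fiber ?Y' c0)) = card C / card (proj C ?Y')"
      using card_code_fiber_mult_card_proj[OF Y c0] card_code_fiber_mult_card_proj[OF Y' c0]
        card_proj_pos[of Y] card_proj_pos[of ?Y']
      by (simp_all add: field_simps flip: of_nat_mult)
    then show ?thesis
      using code_nonempty code_finite by (simp add: field_simps card_gt_0_iff)
  qed
  also have "\<dots> = real ?e + code_rank A C Y - code_rank A C ?Y'"
    using card_alphabet card_proj_pos[of Y] card_proj_pos[of ?Y']
    by (simp add: code_rank_def log_mult log_divide log_nat_power)
  finally show ?thesis .
qed

lemma card_unconstrained_coordinates:
  assumes "X \<subseteq> {1..n} - B" "Y \<subseteq> {1..n}"
  shows "real (card ({1..n} - B - X - Y)) = real n - real k - real (card X) - real (card (Y - (B \<union> X)))"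
proof -
  have "{1..n} - B - X - Y = ({1..n} - B - X) - (Y - (B \<union> X))"
    by blast
  also have "real (card \<dots>) = real (card ({1..n} - B - X)) - real (card (Y - (B \<union> X)))"
    using assms(2) by (intro real_card_Diff_subset) auto
  also have "real (card ({1..n} - B - X)) = real (card ({1..n} - B)) - real (card X)"
    using assms(1) by (simp add: real_card_Diff_subset)
  also have "real (card ({1..n} - B)) = real n - real k"
    using basis_subset card_basis[OF basis] by (simp add: real_card_Diff_subset)
  finally show ?thesis .
qed

end

theorem mainTheorem10:
  fixes A :: "'a set" and n k :: nat and C :: "(nat \<Rightarrow> 'a) set" and B X Y :: "nat set"
    and \<phi> :: "'a \<Rightarrow> 'a \<Rightarrow> 'a"
  assumes "finite A" and "card A \<ge> 2"
    and "almost_affine A n k C"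
    and "is_basis A n C B"
    and "\<forall>y \<in> A. bij_betw (\<lambda>x. \<phi> y x) A A \<and> bij_betw (\<lambda>x. \<phi> x y) A A"
    and "X \<subseteq> {1..n} - B" and "Y \<subseteq> {1..n}"
  shows "cond_entropy A n B \<phi> C X Y = real n - real k - real (card X) - rho A C B X Y"
proof -
  interpret masked_almost_affine_code A n k C B \<phi>
    using assms(1-5) by unfold_locales
  show ?thesis
    using cond_entropy_eq[OF assms(6,7)] card_unconstrained_coordinates[OF assms(6,7)]
    by (simp add: rho_def rank_D_def)
qed

end
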